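(* If a monoid $M$ is the limit of an inductive system of sofic monoids, then $M$ is sofic.
   Context: An inductive system of monoids $(M_i,\psi_{ji})$ consists of a directed set $I$, monoids $M_i$ ($i\in I$), and monoid morphisms $\psi_{ji}\colon M_i\to M_j$ for $i\le j$ with $\psi_{ii}=\mathrm{Id}_{M_i}$ and $\psi_{kj}\circ\psi_{ji}=\psi_{ki}$ for $i\le j\le k$. Its limit is the quotient of the disjoint union $\coprod_i M_i$ by the relation $x_i\sim x_j$ ($x_i\in M_i$, $x_j\in M_j$) iff there is $\ell\ge i,j$ with $\psi_{\ell i}(x_i)=\psi_{\ell j}(x_j)$, with multiplication $[x_i][y_j]=[\psi_{\ell i}(x_i)\psi_{\ell j}(y_j)]$ for any $\ell\ge i,j$. For a non-empty finite set $X$, $\mathrm{Map}(X)$ is the monoid of all maps $X\to X$ under composition (identity $\mathrm{Id}_X$) with the Hamming metric $d_X(f,g)=|\{x\in X : f(x)\ne g(x)\}|/|X|$. For a monoid $M$, finite $K\subset M$ and $\varepsilon,\alpha>0$, a map $\varphi\colon M\to\mathrm{Map}(X)$ is a $(K,\varepsilon)$-morphism if $d_X(\varphi(k_1k_2),\varphi(k_1)\varphi(k_2))\le\varepsilon$ for all $k_1,k_2\in K$ and $d_X(\varphi(1_M),\mathrm{Id}_X)\le\varepsilon$; it is $(K,\alpha)$-injective if $d_X(\varphi(k_1),\varphi(k_2))\ge\alpha$ for all distinct $k_1,k_2\in K$. $M$ is sofic if for every finite $K\subset M$ and every $\varepsilon>0$ there exist a non-empty finite set $X$ and a $(K,1-\varepsilon)$-injective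 $(K,\varepsilon)$-morphism $\varphi\colon M\to\mathrm{Map}(X)$. *)

theory Defs
  imports Complex_Main "HOL-Algebra.Group"
begin

text \<open>A non-empty finite set X is taken WLOG to be {..<n} with n > 0 (every non-empty
finite set is in bijection with such a set, and all notions below are invariant under
such bijections). An element of Map(X) is represented by a function nat => nat mapping
X into X; only its values on X matter.\<close>

definition maps_into :: "nat \<Rightarrow> (nat \<Rightarrow> nat) \<Rightarrow> bool" where
  "maps_into n f \<longleftrightarrow> (\<forall>x<n. f x < n)"

definition hamming :: "nat \<Rightarrow> (nat \<Rightarrow> nat) \<Rightarrow> (nat \<Rightarrow> nat) \<Rightarrow> real" where
  "hamming n f g = real (card {x. x < n \<and> f x \<noteq> g x}) / real n"

definition is_KE_morphism ::
  "('a, 'b) monoid_scheme \<Rightarrow> 'a set \<Rightarrow> real \<Rightarrow> nat \<Rightarrow> ('a \<Rightarrow> nat \<Rightarrow> nat) \<Rightarrow> bool" where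
  "is_KE_morphism M K \<epsilon> n \<phi> \<longleftrightarrow>
     (\<forall>k1\<in>K. \<forall>k2\<in>K. hamming n (\<phi> (k1 \<otimes>\<^bsub>M\<^esub> k2)) (\<phi> k1 \<circ> \<phi> k2) \<le> \<epsilon>) \<and>
     hamming n (\<phi> \<one>\<^bsub>M\<^esub>) id \<le> \<epsilon>"

definition is_K_injective ::
  "'a set \<Rightarrow> real \<Rightarrow> nat \<Rightarrow> ('a \<Rightarrow> nat \<Rightarrow> nat) \<Rightarrow> bool" where
  "is_K_injective K \<alpha> n \<phi> \<longleftrightarrow>
     (\<forall>k1\<in>K. \<forall>k2\<in>K. k1 \<noteq> k2 \<longrightarrow> hamming n (\<phi> k1) (\<phi> k2) \<ge> \<alpha>)"

definition sofic :: "('a, 'b) monoid_scheme \<Rightarrow> bool" where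
  "sofic M \<longleftrightarrow>
     (\<forall>K \<epsilon>. K \<subseteq> carrier M \<and> finite K \<and> \<epsilon> > 0 \<longrightarrow>
        (\<exists>n::nat. \<exists>\<phi>::'a \<Rightarrow> nat \<Rightarrow> nat. n > 0 \<and>
            (\<forall>m\<in>carrier M. maps_into n (\<phi> m)) \<and>
            is_K_injective K (1 - \<epsilon>) n \<phi> \<and> is_KE_morphism M K \<epsilon> n \<phi>))"

definition directed_set :: "'i set \<Rightarrow> ('i \<Rightarrow> 'i \<Rightarrow> bool) \<Rightarrow> bool" where
  "directed_set I leq \<longleftrightarrow> I \<noteq> {} \<and>
     (\<forall>i\<in>I. leq i i) \<and>
     (\<forall>i\<in>I. \<forall>j\<in>I. \<forall>k\<in>I. leq i j \<longrightarrow> leq j k \<longrightarrow> leq i k) \<and>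
     (\<forall>i\<in>I. \<forall>j\<in>I. \<exists>k\<in>I. leq i k \<and> leq j k)"

text \<open>psi j i is the transition morphism M i -> M j for i <= j.\<close>
definition inductive_system ::
  "'i set \<Rightarrow> ('i \<Rightarrow> 'i \<Rightarrow> bool) \<Rightarrow> ('i \<Rightarrow> ('a, 'b) monoid_scheme) \<Rightarrow> ('i \<Rightarrow> 'i \<Rightarrow> 'a \<Rightarrow> 'a) \<Rightarrow> bool" where
  "inductive_system I leq M \<psi> \<longleftrightarrow> directed_set I leq \<and>
     (\<forall>i\<in>I. monoid (M i)) \<and>
     (\<forall>i\<in>I. \<forall>j\<in>I. leq i j \<longrightarrow> \<psi> j i \<in> hom (M i) (M j) \<and> \<psi> j i \<one>\<^bsub>M i\<^esub> = \<one>\<^bsub>M j\<^esub>) \<and>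
     (\<forall>i\<in>I. \<forall>x\<in>carrier (M i). \<psi> i i x = x) \<and>
     (\<forall>i\<in>I. \<forall>j\<in>I. \<forall>k\<in>I. leq i j \<longrightarrow> leq j k \<longrightarrow>
        (\<forall>x\<in>carrier (M i). \<psi> k j (\<psi> j i x) = \<psi> k i x))"

definition lim_rel ::
  "'i set \<Rightarrow> ('i \<Rightarrow> 'i \<Rightarrow> bool) \<Rightarrow> ('i \<Rightarrow> ('a, 'b) monoid_scheme) \<Rightarrow> ('i \<Rightarrow> 'i \<Rightarrow> 'a \<Rightarrow> 'a)
     \<Rightarrow> (('i \<times> 'a) \<times> ('i \<times> 'a)) set" where
  "lim_rel I leq M \<psi> = {((i, x), (j, y)). i \<in> I \<and> j \<in> I \<and> x \<in> carrier (M i) \<and> y \<in> carrier (M j) \<and>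
      (\<exists>l\<in>I. leq i l \<and> leq j l \<and> \<psi> l i x = \<psi> l j y)}"

definition ind_limit ::
  "'i set \<Rightarrow> ('i \<Rightarrow> 'i \<Rightarrow> bool) \<Rightarrow> ('i \<Rightarrow> ('a, 'b) monoid_scheme) \<Rightarrow> ('i \<Rightarrow> 'i \<Rightarrow> 'a \<Rightarrow> 'a)
     \<Rightarrow> ('i \<times> 'a) set monoid" where
  "ind_limit I leq M \<psi> =
     \<lparr> carrier = (SIGMA i:I. carrier (M i)) // lim_rel I leq M \<psi>,
       mult = (\<lambda>A B. THE C. \<exists>i x j y l. (i, x) \<in> A \<and> (j, y) \<in> B \<and> l \<in> I \<and> leq i l \<and> leq j l \<and>
                 C = lim_rel I leq M \<psi> `` {(l, \<psi> l i x \<otimes>\<^bsub>M l\<^esub> \<psi> l j y)}),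
       one = (THE C. \<exists>i\<in>I. C = lim_rel I leq M \<psi> `` {(i, \<one>\<^bsub>M i\<^esub>)}) \<rparr>"

end

theory Submission
  imports Defs
begin

text \<open>A monoid is sofic as soon as each finite subset K embeds, multiplicatively on K and
unitally, into some sofic monoid: precomposing a sofic approximation of the image with the
embedding gives one for K. For a limit of an inductive system, a finite set of classes has
representatives at one common level; the finitely many relations among products and the unit of
these classes hold there only up to the equivalence, but each holds exactly at some later level,
hence all of them at one level by directedness, while distinct classes stay distinct at every
level. So finite subsets of the limit embed into members of the system.\<close>

definition local_embedding ::
  "('a, 'b) monoid_scheme \<Rightarrow> ('c, 'd) monoid_scheme \<Rightarrow> 'a set \<Rightarrow> ('a \<Rightarrow> 'c) \<Rightarrow> bool" where
  "local_embedding M N K y \<longleftrightarrow>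
     y \<in> carrier M \<rightarrow> carrier N \<and> inj_on y K \<and>
     (\<forall>a\<in>K. \<forall>b\<in>K. y (a \<otimes>\<^bsub>M\<^esub> b) = y a \<otimes>\<^bsub>N\<^esub> y b) \<and> y \<one>\<^bsub>M\<^esub> = \<one>\<^bsub>N\<^esub>"

lemma sofic_local_embedding_pullback:
  assumes "sofic N" "local_embedding M N K y" "K \<subseteq> carrier M" "finite K" "\<epsilon> > 0"
  obtains n \<phi> where "n > 0" "\<forall>m\<in>carrier M. maps_into n (\<phi> m)"
    "is_K_injective K (1 - \<epsilon>) n \<phi>" "is_KE_morphism M K \<epsilon> n \<phi>"
proof -
  have y: "y \<in> carrier M \<rightarrow> carrier N" "inj_on y K"
    "\<And>a b. a \<in> K \<Longrightarrow> b \<in> K \<Longrightarrow> y (a \<otimes>\<^bsub>M\<^esub> b) = y a \<otimes>\<^bsub>N\<^esub> y b" "y \<one>\<^bsub>M\<^esub> = \<one>\<^bsub>N\<^esub>"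
    using assms(2) unfolding local_embedding_def by auto
  have "y ` K \<subseteq> carrier N" "finite (y ` K)" using y(1) assms(3,4) by auto
  then obtain n \<phi> where n: "n > 0" "\<forall>m\<in>carrier N. maps_into n (\<phi> m)"
    "is_K_injective (y ` K) (1 - \<epsilon>) n \<phi>" "is_KE_morphism N (y ` K) \<epsilon> n \<phi>"
    using assms(1,5) unfolding sofic_def by meson
  show thesis
  proof
    show "n > 0" by (fact n(1))
    show "\<forall>m\<in>carrier M. maps_into n ((\<phi> \<circ> y) m)" using n(2) y(1) by auto
    show "is_K_injective K (1 - \<epsilon>) n (\<phi> \<circ> y)"
      using n(3) y(2) unfolding is_K_injective_def inj_on_def by auto
    show "is_KE_morphism M K \<epsilon> n (\<phi> \<circ> y)"
      using n(4) y(3,4) unfolding is_KE_morphism_def by auto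
  qed
qed

lemma sofic_if_locally_embeddable:
  fixes M :: "('a, 'b) monoid_scheme"
  assumes "\<And>K. K \<subseteq> carrier M \<Longrightarrow> finite K \<Longrightarrow>
             \<exists>(N :: ('c, 'd) monoid_scheme) y. sofic N \<and> local_embedding M N K y"
  shows "sofic M"
  unfolding sofic_def
proof (intro allI impI)
  fix K \<epsilon> assume K: "K \<subseteq> carrier M \<and> finite K \<and> (\<epsilon>::real) > 0"
  then obtain N :: "('c, 'd) monoid_scheme" and y where "sofic N" "local_embedding M N K y"
    using assms by blast
  with K show "\<exists>n \<phi>. n > 0 \<and> (\<forall>m\<in>carrier M. maps_into n (\<phi> m)) \<and>
      is_K_injective K (1 - \<epsilon>) n \<phi> \<and> is_KE_morphism M K \<epsilon> n \<phi>"
    by (meson sofic_local_embedding_pullback)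
qed

text \<open>A homomorphism in the sense of HOL-Algebra need not preserve the unit.\<close>

lemma iso_one_right_unit:
  assumes "monoid M" "h \<in> iso M L" "\<one>\<^bsub>L\<^esub> \<in> carrier L"
    and right_unit: "\<And>a. a \<in> carrier L \<Longrightarrow> a \<otimes>\<^bsub>L\<^esub> \<one>\<^bsub>L\<^esub> = a"
  shows "h \<one>\<^bsub>M\<^esub> = \<one>\<^bsub>L\<^esub>"
proof -
  have hom: "h \<in> hom M L" and onto: "h ` carrier M = carrier L"
    using assms(2) by (auto simp: iso_def bij_betw_def)
  obtain m where m: "m \<in> carrier M" "h m = \<one>\<^bsub>L\<^esub>" using onto assms(3) by (metis imageE)
  have one: "\<one>\<^bsub>M\<^esub> \<in> carrier M" using assms(1) by (rule monoid.one_closed)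
  have "h \<one>\<^bsub>M\<^esub> = h \<one>\<^bsub>M\<^esub> \<otimes>\<^bsub>L\<^esub> h m"
    using right_unit[of "h \<one>\<^bsub>M\<^esub>"] hom_in_carrier[OF hom one] m(2) by simp
  also have "\<dots> = h (\<one>\<^bsub>M\<^esub> \<otimes>\<^bsub>M\<^esub> m)" using hom one m(1) by (simp add: hom_mult)
  also have "\<dots> = \<one>\<^bsub>L\<^esub>" using assms(1) m by (simp add: monoid.l_one)
  finally show ?thesis .
qed

lemma local_embedding_iso_comp:
  assumes "h \<in> iso M L" "h \<one>\<^bsub>M\<^esub> = \<one>\<^bsub>L\<^esub>" "K \<subseteq> carrier M"
    and y: "local_embedding L N (h ` K) y"
  shows "local_embedding M N K (y \<circ> h)"
  unfolding local_embedding_def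
proof (intro conjI ballI)
  have hom: "h \<in> hom M L" and inj: "inj_on h (carrier M)"
    using assms(1) by (auto simp: iso_def bij_betw_def)
  show "y \<circ> h \<in> carrier M \<rightarrow> carrier N"
    using y hom_in_carrier[OF hom] by (auto simp: local_embedding_def)
  show "inj_on (y \<circ> h) K"
    using y inj_on_subset[OF inj assms(3)] by (auto simp: local_embedding_def intro: comp_inj_on)
  show "(y \<circ> h) (a \<otimes>\<^bsub>M\<^esub> b) = (y \<circ> h) a \<otimes>\<^bsub>N\<^esub> (y \<circ> h) b" if "a \<in> K" "b \<in> K" for a b
  proof -
    have "h (a \<otimes>\<^bsub>M\<^esub> b) = h a \<otimes>\<^bsub>L\<^esub> h b" using that assms(3) hom_mult[OF hom] by blast
    then show ?thesis using y that by (simp add: local_embedding_def)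
  qed
  show "(y \<circ> h) \<one>\<^bsub>M\<^esub> = \<one>\<^bsub>N\<^esub>"
    using y assms(2) by (simp add: local_embedding_def)
qed

locale ind_system =
  fixes I :: "'i set" and leq :: "'i \<Rightarrow> 'i \<Rightarrow> bool"
    and Ms :: "'i \<Rightarrow> ('a, 'b) monoid_scheme" and \<psi> :: "'i \<Rightarrow> 'i \<Rightarrow> 'a \<Rightarrow> 'a"
  assumes ind_system: "inductive_system I leq Ms \<psi>"
begin

abbreviation "R \<equiv> lim_rel I leq Ms \<psi>"
abbreviation "S \<equiv> SIGMA i:I. carrier (Ms i)"
abbreviation "L \<equiv> ind_limit I leq Ms \<psi>"
abbreviation cls :: "'i \<Rightarrow> 'a \<Rightarrow> ('i \<times> 'a) set" where "cls i x \<equiv> R `` {(i, x)}"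

lemma index_nonempty: "I \<noteq> {}"
  and leq_refl: "i \<in> I \<Longrightarrow> leq i i"
  and leq_trans: "i \<in> I \<Longrightarrow> j \<in> I \<Longrightarrow> k \<in> I \<Longrightarrow> leq i j \<Longrightarrow> leq j k \<Longrightarrow> leq i k"
  and upper_bound: "i \<in> I \<Longrightarrow> j \<in> I \<Longrightarrow> \<exists>k\<in>I. leq i k \<and> leq j k"
  using ind_system unfolding inductive_system_def directed_set_def by blast+

lemma monoid_Ms: "i \<in> I \<Longrightarrow> monoid (Ms i)"
  and psi_hom: "i \<in> I \<Longrightarrow> j \<in> I \<Longrightarrow> leq i j \<Longrightarrow> \<psi> j i \<in> hom (Ms i) (Ms j)"
  and psi_one: "i \<in> I \<Longrightarrow> j \<in> I \<Longrightarrow> leq i j \<Longrightarrow> \<psi> j i \<one>\<^bsub>Ms i\<^esub> = \<one>\<^bsub>Ms j\<^esub>"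
  and psi_id: "i \<in> I \<Longrightarrow> x \<in> carrier (Ms i) \<Longrightarrow> \<psi> i i x = x"
  and psi_comp: "i \<in> I \<Longrightarrow> j \<in> I \<Longrightarrow> k \<in> I \<Longrightarrow> leq i j \<Longrightarrow> leq j k \<Longrightarrow>
      x \<in> carrier (Ms i) \<Longrightarrow> \<psi> k j (\<psi> j i x) = \<psi> k i x"
  using ind_system unfolding inductive_system_def by blast+

lemma psi_closed: "i \<in> I \<Longrightarrow> j \<in> I \<Longrightarrow> leq i j \<Longrightarrow> x \<in> carrier (Ms i) \<Longrightarrow> \<psi> j i x \<in> carrier (Ms j)"
  using psi_hom by (rule hom_in_carrier)

lemma psi_mult: "i \<in> I \<Longrightarrow> j \<in> I \<Longrightarrow> leq i j \<Longrightarrow> x \<in> carrier (Ms i) \<Longrightarrow> y \<in> carrier (Ms i) \<Longrightarrow>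
    \<psi> j i (x \<otimes>\<^bsub>Ms i\<^esub> y) = \<psi> j i x \<otimes>\<^bsub>Ms j\<^esub> \<psi> j i y"
  using psi_hom by (simp add: hom_mult)

lemma upper_bound_finite: "finite F \<Longrightarrow> F \<subseteq> I \<Longrightarrow> \<exists>l\<in>I. \<forall>i\<in>F. leq i l"
proof (induction F rule: finite_induct)
  case empty
  then show ?case using index_nonempty by auto
next
  case (insert a F)
  then obtain l where l: "l \<in> I" "\<forall>i\<in>F. leq i l" by auto
  obtain k where k: "k \<in> I" "leq a k" "leq l k" using upper_bound[of a l] insert.prems l(1) by auto
  show ?case
    using insert.prems l k leq_trans[of _ l k] by (intro bexI[of _ k]) auto
qed

lemma lim_rel_iff: "((i, x), (j, y)) \<in> R \<longleftrightarrow> (i, x) \<in> S \<and> (j, y) \<in> S \<and>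
    (\<exists>l\<in>I. leq i l \<and> leq j l \<and> \<psi> l i x = \<psi> l j y)"
  unfolding lim_rel_def by auto

lemma lim_rel_eventually_eq:
  assumes "((i, x), (j, y)) \<in> R" "l \<in> I" "leq i l" "leq j l"
  shows "\<exists>p\<in>I. leq l p \<and> \<psi> p i x = \<psi> p j y"
proof -
  obtain m where m: "m \<in> I" "leq i m" "leq j m" "\<psi> m i x = \<psi> m j y"
    and xy: "i \<in> I" "j \<in> I" "x \<in> carrier (Ms i)" "y \<in> carrier (Ms j)"
    using assms(1) lim_rel_iff by auto
  obtain p where p: "p \<in> I" "leq l p" "leq m p" using upper_bound assms(2) m(1) by blast
  have "\<psi> p i x = \<psi> p m (\<psi> m i x)" using psi_comp[of i m p x] xy m p by simp
  also have "\<dots> = \<psi> p j y" using psi_comp[of j m p y] xy m p by simp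
  finally show ?thesis using p by blast
qed

lemma lim_rel_equiv: "equiv S R"
proof (rule equivI)
  show "R \<subseteq> S \<times> S" unfolding lim_rel_def by auto
  show "refl_on S R" unfolding refl_on_def by (force simp: lim_rel_iff intro: leq_refl)
  show "sym R" unfolding sym_def lim_rel_def by auto
  show "trans R" unfolding trans_def
  proof clarify
    fix i x j y k z assume xy: "((i, x), (j, y)) \<in> R" and yz: "((j, y), (k, z)) \<in> R"
    then have ijk: "i \<in> I" "j \<in> I" "k \<in> I" "x \<in> carrier (Ms i)" "y \<in> carrier (Ms j)"
      by (auto simp: lim_rel_iff)
    obtain l where l: "l \<in> I" "\<forall>m\<in>{i, j, k}. leq m l"
      using upper_bound_finite[of "{i, j, k}"] ijk by auto
    obtain p where p: "p \<in> I" "leq l p" "\<psi> p i x = \<psi> p j y"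
      using lim_rel_eventually_eq[OF xy l(1)] l(2) by auto
    have jkp: "leq i p" "leq j p" "leq k p" using ijk l p leq_trans[of _ l p] by auto
    obtain q where q: "q \<in> I" "leq p q" "\<psi> q j y = \<psi> q k z"
      using lim_rel_eventually_eq[OF yz p(1) jkp(2,3)] by blast
    have "\<psi> q i x = \<psi> q p (\<psi> p i x)" using psi_comp[of i p q x] ijk p q jkp by simp
    also have "\<dots> = \<psi> q p (\<psi> p j y)" using p by simp
    also have "\<dots> = \<psi> q k z" using psi_comp[of j p q y] ijk p q jkp by simp
    finally have "\<psi> q i x = \<psi> q k z" .
    moreover have "leq i q" "leq k q" using ijk p q jkp leq_trans[of _ p q] by auto
    moreover have "z \<in> carrier (Ms k)" using yz by (auto simp: lim_rel_iff)
    ultimately show "((i, x), (k, z)) \<in> R" using ijk q(1) unfolding lim_rel_iff by blast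
  qed
qed

lemma cls_eq_iff: "(i, x) \<in> S \<Longrightarrow> (j, y) \<in> S \<Longrightarrow> cls i x = cls j y \<longleftrightarrow> ((i, x), (j, y)) \<in> R"
  by (rule eq_equiv_class_iff[OF lim_rel_equiv])

lemma cls_push: "i \<in> I \<Longrightarrow> l \<in> I \<Longrightarrow> leq i l \<Longrightarrow> x \<in> carrier (Ms i) \<Longrightarrow> cls i x = cls l (\<psi> l i x)"
  by (subst cls_eq_iff) (auto simp: lim_rel_iff psi_closed psi_comp psi_id intro!: bexI[of _ l] leq_refl)

lemma cls_mult_push:
  assumes "(i, x) \<in> S" "(j, y) \<in> S" "l \<in> I" "q \<in> I" "leq i l" "leq j l" "leq l q"
  shows "cls l (\<psi> l i x \<otimes>\<^bsub>Ms l\<^esub> \<psi> l j y) = cls q (\<psi> q i x \<otimes>\<^bsub>Ms q\<^esub> \<psi> q j y)"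
proof -
  have "\<psi> l i x \<in> carrier (Ms l)" "\<psi> l j y \<in> carrier (Ms l)" using assms psi_closed by auto
  moreover have "\<psi> q l (\<psi> l i x) = \<psi> q i x" "\<psi> q l (\<psi> l j y) = \<psi> q j y"
    using assms psi_comp by auto
  ultimately show ?thesis
    using assms cls_push[of l q] psi_mult[of l q] monoid.m_closed[OF monoid_Ms] by simp
qed

lemma cls_mult_cong:
  assumes "l \<in> I" "a \<in> carrier (Ms l)" "a' \<in> carrier (Ms l)" "b \<in> carrier (Ms l)" "b' \<in> carrier (Ms l)"
    and "cls l a = cls l a'" "cls l b = cls l b'"
  shows "cls l (a \<otimes>\<^bsub>Ms l\<^esub> b) = cls l (a' \<otimes>\<^bsub>Ms l\<^esub> b')"
proof -
  have "((l, a), (l, a')) \<in> R" "((l, b), (l, b')) \<in> R" using assms cls_eq_iff by auto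
  then obtain p q where p: "p \<in> I" "leq l p" "\<psi> p l a = \<psi> p l a'"
    and q: "q \<in> I" "leq p q" "\<psi> q l b = \<psi> q l b'"
    using lim_rel_eventually_eq assms(1) leq_refl by meson
  have lq: "leq l q" using p q assms(1) leq_trans by blast
  have "\<psi> q l a = \<psi> q l a'" using p q assms psi_comp[of l p q a] psi_comp[of l p q a'] by metis
  then show ?thesis
    using assms q(1,3) lq cls_mult_push[of l a l b l q] cls_mult_push[of l a' l b' l q] psi_id leq_refl
    by auto
qed

lemma lim_mult:
  assumes "(i, x) \<in> S" "(j, y) \<in> S" "l \<in> I" "leq i l" "leq j l"
  shows "cls i x \<otimes>\<^bsub>L\<^esub> cls j y = cls l (\<psi> l i x \<otimes>\<^bsub>Ms l\<^esub> \<psi> l j y)"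
proof -
  have unique: "C = cls l (\<psi> l i x \<otimes>\<^bsub>Ms l\<^esub> \<psi> l j y)"
    if reps: "(i', x') \<in> cls i x" "(j', y') \<in> cls j y" "l' \<in> I" "leq i' l'" "leq j' l'"
      and C: "C = cls l' (\<psi> l' i' x' \<otimes>\<^bsub>Ms l'\<^esub> \<psi> l' j' y')" for C i' x' j' y' l'
  proof -
    have xx': "((i, x), (i', x')) \<in> R" and yy': "((j, y), (j', y')) \<in> R" using reps by auto
    then have S': "(i', x') \<in> S" "(j', y') \<in> S" by (auto simp: lim_rel_iff)
    obtain q where q: "q \<in> I" "leq l q" "leq l' q" using upper_bound assms(3) reps(3) by blast
    have iq: "leq i q" "leq j q" "leq i' q" "leq j' q"
      using assms reps q S' leq_trans by blast+
    have "cls i x = cls i' x'" "cls j y = cls j' y'"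
      using xx' yy' equiv_class_eq[OF lim_rel_equiv] by auto
    then have "cls q (\<psi> q i x) = cls q (\<psi> q i' x')" "cls q (\<psi> q j y) = cls q (\<psi> q j' y')"
      using assms S' q iq cls_push[of _ q] by auto
    then have "cls q (\<psi> q i x \<otimes>\<^bsub>Ms q\<^esub> \<psi> q j y) = cls q (\<psi> q i' x' \<otimes>\<^bsub>Ms q\<^esub> \<psi> q j' y')"
      using cls_mult_cong assms S' q iq psi_closed by auto
    then show ?thesis
      using C assms reps S' q iq cls_mult_push[of i x j y l q] cls_mult_push[of i' x' j' y' l' q] by auto
  qed
  have self: "(i, x) \<in> cls i x" "(j, y) \<in> cls j y"
    using assms equiv_class_self[OF lim_rel_equiv] by auto
  show ?thesis
    unfolding ind_limit_def monoid.select_convs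
    apply (rule the_equality)
     apply (rule exI[of _ i], rule exI[of _ x], rule exI[of _ j], rule exI[of _ y], rule exI[of _ l])
     apply (intro conjI self assms refl)
    apply (elim exE conjE)
    apply (erule (5) unique)
    done
qed

lemma lim_carrier: "carrier L = S // R"
  unfolding ind_limit_def by (rule partial_object.select_convs)

lemma lim_carrierE:
  assumes "a \<in> carrier L"
  obtains i x where "i \<in> I" "x \<in> carrier (Ms i)" "a = cls i x"
proof -
  obtain p where "p \<in> S" "a = R `` {p}" using assms unfolding lim_carrier by (rule quotientE)
  then show thesis using that by (cases p) blast
qed

lemma cls_in_lim_carrier: "(i, x) \<in> S \<Longrightarrow> cls i x \<in> carrier L"
  by (simp add: lim_carrier quotientI)

lemma lim_one: "i \<in> I \<Longrightarrow> \<one>\<^bsub>L\<^esub> = cls i \<one>\<^bsub>Ms i\<^esub>"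
proof -
  assume i: "i \<in> I"
  have all_equal: "C = cls i \<one>\<^bsub>Ms i\<^esub>" if j: "j \<in> I" and C: "C = cls j \<one>\<^bsub>Ms j\<^esub>" for C j
  proof -
    obtain k where k: "k \<in> I" "leq i k" "leq j k" using upper_bound[OF i j] by blast
    have "cls j \<one>\<^bsub>Ms j\<^esub> = cls k \<one>\<^bsub>Ms k\<^esub>" "cls i \<one>\<^bsub>Ms i\<^esub> = cls k \<one>\<^bsub>Ms k\<^esub>"
      using cls_push[OF j k(1,3)] cls_push[OF i k(1,2)] psi_one[OF j k(1,3)] psi_one[OF i k(1,2)]
        monoid.one_closed[OF monoid_Ms[OF j]] monoid.one_closed[OF monoid_Ms[OF i]]
      by simp_all
    then show ?thesis using C by simp
  qed
  show ?thesis
    unfolding ind_limit_def monoid.select_convs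
  proof (rule the_equality)
    show "\<exists>j\<in>I. cls i \<one>\<^bsub>Ms i\<^esub> = cls j \<one>\<^bsub>Ms j\<^esub>" using i by blast
    show "C = cls i \<one>\<^bsub>Ms i\<^esub>" if "\<exists>j\<in>I. C = cls j \<one>\<^bsub>Ms j\<^esub>" for C
      using that all_equal by blast
  qed
qed

lemma lim_one_closed: "\<one>\<^bsub>L\<^esub> \<in> carrier L"
proof -
  obtain i where "i \<in> I" using index_nonempty by blast
  then show ?thesis using lim_one cls_in_lim_carrier monoid.one_closed[OF monoid_Ms] by simp
qed

lemma lim_r_one:
  assumes "a \<in> carrier L"
  shows "a \<otimes>\<^bsub>L\<^esub> \<one>\<^bsub>L\<^esub> = a"
proof -
  obtain i x where ix: "i \<in> I" "x \<in> carrier (Ms i)" "a = cls i x"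
    using assms by (rule lim_carrierE)
  have one: "\<one>\<^bsub>Ms i\<^esub> \<in> carrier (Ms i)" using monoid.one_closed[OF monoid_Ms[OF ix(1)]] .
  have "a \<otimes>\<^bsub>L\<^esub> \<one>\<^bsub>L\<^esub> = cls i x \<otimes>\<^bsub>L\<^esub> cls i \<one>\<^bsub>Ms i\<^esub>" using ix lim_one by simp
  also have "\<dots> = cls i (\<psi> i i x \<otimes>\<^bsub>Ms i\<^esub> \<psi> i i \<one>\<^bsub>Ms i\<^esub>)"
    using ix one leq_refl by (intro lim_mult) auto
  also have "\<dots> = a" using ix one psi_id monoid.r_one[OF monoid_Ms] by simp
  finally show ?thesis .
qed

lemma lim_mult_closed:
  assumes "a \<in> carrier L" "b \<in> carrier L"
  shows "a \<otimes>\<^bsub>L\<^esub> b \<in> carrier L"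
proof -
  obtain i x where ix: "(i, x) \<in> S" "a = cls i x" using assms(1) by (rule lim_carrierE) simp
  obtain j y where jy: "(j, y) \<in> S" "b = cls j y" using assms(2) by (rule lim_carrierE) simp
  obtain l where l: "l \<in> I" "leq i l" "leq j l" using upper_bound[of i j] ix(1) jy(1) by auto
  have "\<psi> l i x \<otimes>\<^bsub>Ms l\<^esub> \<psi> l j y \<in> carrier (Ms l)"
    using ix jy l psi_closed monoid.m_closed[OF monoid_Ms] by auto
  then show ?thesis using ix jy l lim_mult cls_in_lim_carrier by simp
qed

lemma lim_classes_common_level:
  assumes "finite A" "A \<subseteq> carrier L"
  obtains l r where "l \<in> I" "\<And>a. a \<in> A \<Longrightarrow> r a \<in> carrier (Ms l)" "\<And>a. a \<in> A \<Longrightarrow> cls l (r a) = a"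
proof -
  have "\<forall>a\<in>A. \<exists>p. p \<in> S \<and> R `` {p} = a"
  proof
    fix a assume "a \<in> A"
    then have "a \<in> S // R" using assms(2) lim_carrier by auto
    then show "\<exists>p. p \<in> S \<and> R `` {p} = a" by (rule quotientE) auto
  qed
  from bchoice[OF this] obtain rep where rep: "\<forall>a\<in>A. rep a \<in> S \<and> R `` {rep a} = a" ..
  have sub: "fst ` rep ` A \<subseteq> I"
  proof (intro image_subsetI)
    fix p assume "p \<in> rep ` A"
    then have "p \<in> S" using rep by blast
    then show "fst p \<in> I" by (auto elim: SigmaE)
  qed
  have fin: "finite (fst ` rep ` A)" using assms(1) by simp
  obtain l where l: "l \<in> I" "\<forall>i\<in>fst ` rep ` A. leq i l"
    using upper_bound_finite[OF fin sub] by blast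
  show thesis
  proof
    show "l \<in> I" by (fact l(1))
    fix a assume a: "a \<in> A"
    obtain i x where ix: "rep a = (i, x)" by force
    then have ix': "i \<in> I" "x \<in> carrier (Ms i)" "leq i l" "cls i x = a"
      using rep a l(2) by force+
    then show "\<psi> l (fst (rep a)) (snd (rep a)) \<in> carrier (Ms l)"
      and "cls l (\<psi> l (fst (rep a)) (snd (rep a))) = a"
      using psi_closed[OF ix'(1) l(1) ix'(3,2)] cls_push[OF ix'(1) l(1) ix'(3,2)] ix ix'(4) by auto
  qed
qed

lemma lim_eventually_eq_finite:
  assumes "finite P" "l \<in> I"
    and "P \<subseteq> {(a, b). a \<in> carrier (Ms l) \<and> b \<in> carrier (Ms l) \<and> cls l a = cls l b}"
  shows "\<exists>q\<in>I. leq l q \<and> (\<forall>(a, b)\<in>P. \<psi> q l a = \<psi> q l b)"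
  using assms
proof (induction P rule: finite_induct)
  case empty
  then show ?case using leq_refl by blast
next
  case (insert ab P)
  obtain a b where ab: "ab = (a, b)" by force
  have "a \<in> carrier (Ms l)" "b \<in> carrier (Ms l)" "cls l a = cls l b"
    using insert.prems(2) ab by auto
  then have ab_rel: "((l, a), (l, b)) \<in> R" using insert.prems(1) cls_eq_iff by simp
  obtain q where q: "q \<in> I" "leq l q" "\<forall>(a, b)\<in>P. \<psi> q l a = \<psi> q l b"
    using insert.IH[OF insert.prems(1)] insert.prems(2) by auto
  obtain p where p: "p \<in> I" "leq q p" "\<psi> p l a = \<psi> p l b"
    using lim_rel_eventually_eq[OF ab_rel q(1,2,2)] by blast
  have lp: "leq l p" using leq_trans[OF insert.prems(1) q(1) p(1) q(2) p(2)] .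
  have "\<psi> p l c = \<psi> p l d" if "(c, d) \<in> P" for c d
  proof -
    have "c \<in> carrier (Ms l)" "d \<in> carrier (Ms l)" using that insert.prems(2) by auto
    moreover have "\<psi> p q (\<psi> q l c) = \<psi> p q (\<psi> q l d)" using q(3) that by auto
    ultimately show ?thesis using psi_comp[OF insert.prems(1) q(1) p(1) q(2) p(2)] by simp
  qed
  then show ?case using p(1,3) lp ab by auto
qed

lemma lim_representatives:
  assumes "finite A" "A \<subseteq> carrier L"
  obtains l r where "l \<in> I" "r \<in> carrier L \<rightarrow> carrier (Ms l)" "\<And>a. a \<in> A \<Longrightarrow> cls l (r a) = a"
    "\<And>a b. a \<in> A \<Longrightarrow> b \<in> A \<Longrightarrow> cls l (r (a \<otimes>\<^bsub>L\<^esub> b)) = cls l (r a \<otimes>\<^bsub>Ms l\<^esub> r b)"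
    "cls l (r \<one>\<^bsub>L\<^esub>) = cls l \<one>\<^bsub>Ms l\<^esub>"
proof -
  define A' where "A' = insert \<one>\<^bsub>L\<^esub> (A \<union> (\<lambda>(a, b). a \<otimes>\<^bsub>L\<^esub> b) ` (A \<times> A))"
  have A': "finite A'" "A' \<subseteq> carrier L" "A \<subseteq> A'" "\<one>\<^bsub>L\<^esub> \<in> A'"
    "\<And>a b. a \<in> A \<Longrightarrow> b \<in> A \<Longrightarrow> a \<otimes>\<^bsub>L\<^esub> b \<in> A'"
    using assms lim_one_closed lim_mult_closed unfolding A'_def by auto
  obtain l r0 where l: "l \<in> I" and r0_closed: "\<And>a. a \<in> A' \<Longrightarrow> r0 a \<in> carrier (Ms l)"
    and r0_cls: "\<And>a. a \<in> A' \<Longrightarrow> cls l (r0 a) = a"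
    using lim_classes_common_level[OF A'(1,2)] by blast
  define r where "r a = (if a \<in> A' then r0 a else \<one>\<^bsub>Ms l\<^esub>)" for a
  have r_closed: "r a \<in> carrier (Ms l)" for a
    using r0_closed monoid.one_closed[OF monoid_Ms[OF l]] by (simp add: r_def)
  have r_cls: "cls l (r a) = a" if "a \<in> A'" for a
    using r0_cls that by (simp add: r_def)
  show thesis
  proof
    show "l \<in> I" "r \<in> carrier L \<rightarrow> carrier (Ms l)" using l r_closed by auto
    show "cls l (r a) = a" if "a \<in> A" for a using r_cls that A'(3) by blast
    show "cls l (r \<one>\<^bsub>L\<^esub>) = cls l \<one>\<^bsub>Ms l\<^esub>" using r_cls[OF A'(4)] lim_one[OF l] by simp
    fix a b assume ab: "a \<in> A" "b \<in> A"
    then have "a \<in> A'" "b \<in> A'" "a \<otimes>\<^bsub>L\<^esub> b \<in> A'" using A'(3,5) by auto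
    then have "cls l (r (a \<otimes>\<^bsub>L\<^esub> b)) = cls l (r a) \<otimes>\<^bsub>L\<^esub> cls l (r b)"
      using r_cls by simp
    also have "\<dots> = cls l (r a \<otimes>\<^bsub>Ms l\<^esub> r b)"
      using lim_mult[of l "r a" l "r b" l] l leq_refl r_closed psi_id by simp
    finally show "cls l (r (a \<otimes>\<^bsub>L\<^esub> b)) = cls l (r a \<otimes>\<^bsub>Ms l\<^esub> r b)" .
  qed
qed

lemma lim_local_embedding:
  assumes "finite A" "A \<subseteq> carrier L"
  shows "\<exists>l\<in>I. \<exists>y. local_embedding L (Ms l) A y"
proof -
  obtain l0 r where l0: "l0 \<in> I" and r_closed: "r \<in> carrier L \<rightarrow> carrier (Ms l0)"
    and r_cls: "\<And>a. a \<in> A \<Longrightarrow> cls l0 (r a) = a"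
    and r_mult: "\<And>a b. a \<in> A \<Longrightarrow> b \<in> A \<Longrightarrow> cls l0 (r (a \<otimes>\<^bsub>L\<^esub> b)) = cls l0 (r a \<otimes>\<^bsub>Ms l0\<^esub> r b)"
    and r_one: "cls l0 (r \<one>\<^bsub>L\<^esub>) = cls l0 \<one>\<^bsub>Ms l0\<^esub>"
    using lim_representatives[OF assms] by blast
  have closed: "r a \<in> carrier (Ms l0)" if "a \<in> carrier L" for a using r_closed that by blast
  have in_A: "a \<in> carrier L" if "a \<in> A" for a using assms(2) that by blast
  \<comment> \<open>The pairs that must become equal: they are only equivalent at level l0.\<close>
  define P where "P = insert (r \<one>\<^bsub>L\<^esub>, \<one>\<^bsub>Ms l0\<^esub>)
      ((\<lambda>(a, b). (r (a \<otimes>\<^bsub>L\<^esub> b), r a \<otimes>\<^bsub>Ms l0\<^esub> r b)) ` (A \<times> A))"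
  let ?same_class = "{(c, d). c \<in> carrier (Ms l0) \<and> d \<in> carrier (Ms l0) \<and> cls l0 c = cls l0 d}"
  have "(r (a \<otimes>\<^bsub>L\<^esub> b), r a \<otimes>\<^bsub>Ms l0\<^esub> r b) \<in> ?same_class" if "a \<in> A" "b \<in> A" for a b
    using closed in_A that lim_mult_closed r_mult[OF that] monoid.m_closed[OF monoid_Ms[OF l0]] by simp
  then have "P \<subseteq> ?same_class"
    using closed[OF lim_one_closed] monoid.one_closed[OF monoid_Ms[OF l0]] r_one unfolding P_def by auto
  then obtain l where l: "l \<in> I" "leq l0 l" "\<forall>(c, d)\<in>P. \<psi> l l0 c = \<psi> l l0 d"
    using lim_eventually_eq_finite[of P l0] l0 assms(1) unfolding P_def by blast
  let ?y = "\<lambda>a. \<psi> l l0 (r a)"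
  have "?y \<in> carrier L \<rightarrow> carrier (Ms l)" using closed l l0 psi_closed by auto
  moreover have "inj_on ?y A"
  proof (rule inj_onI)
    fix a b assume ab: "a \<in> A" "b \<in> A" "?y a = ?y b"
    then have "((l0, r a), (l0, r b)) \<in> R" using closed in_A l l0 unfolding lim_rel_iff by auto
    then have "cls l0 (r a) = cls l0 (r b)" using equiv_class_eq[OF lim_rel_equiv] by blast
    then show "a = b" using r_cls ab by simp
  qed
  moreover have "?y (a \<otimes>\<^bsub>L\<^esub> b) = ?y a \<otimes>\<^bsub>Ms l\<^esub> ?y b" if "a \<in> A" "b \<in> A" for a b
  proof -
    have "(r (a \<otimes>\<^bsub>L\<^esub> b), r a \<otimes>\<^bsub>Ms l0\<^esub> r b) \<in> P" using that unfolding P_def by auto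
    then have "?y (a \<otimes>\<^bsub>L\<^esub> b) = \<psi> l l0 (r a \<otimes>\<^bsub>Ms l0\<^esub> r b)" using l(3) by auto
    then show ?thesis using that closed in_A psi_mult[OF l0 l(1,2)] by simp
  qed
  moreover have "?y \<one>\<^bsub>L\<^esub> = \<one>\<^bsub>Ms l\<^esub>"
    using l(3) psi_one[OF l0 l(1,2)] unfolding P_def by auto
  ultimately show ?thesis using l(1) unfolding local_embedding_def by blast
qed

end

theorem proposition3p10:
  fixes I :: "'i set" and leq :: "'i \<Rightarrow> 'i \<Rightarrow> bool"
    and Ms :: "'i \<Rightarrow> ('a, 'b) monoid_scheme" and \<psi> :: "'i \<Rightarrow> 'i \<Rightarrow> 'a \<Rightarrow> 'a"
    and M :: "('c, 'd) monoid_scheme"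
  assumes "inductive_system I leq Ms \<psi>"
    and "\<forall>i\<in>I. sofic (Ms i)"
    and "monoid M"
    and "M \<cong> ind_limit I leq Ms \<psi>"
  shows "sofic M"
proof -
  interpret ind_system I leq Ms \<psi> by unfold_locales (fact assms(1))
  obtain h where h: "h \<in> iso M L" using assms(4) unfolding is_iso_def by auto
  have hom: "h \<in> hom M L" using h by (rule iso_imp_homomorphism)
  have h_one: "h \<one>\<^bsub>M\<^esub> = \<one>\<^bsub>L\<^esub>"
    using iso_one_right_unit[OF assms(3) h lim_one_closed lim_r_one] .
  have "\<exists>(N :: ('a, 'b) monoid_scheme) y. sofic N \<and> local_embedding M N K y"
    if K: "K \<subseteq> carrier M" "finite K" for K
  proof -
    have "finite (h ` K)" "h ` K \<subseteq> carrier L" using K hom_in_carrier[OF hom] by auto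
    then obtain l y where l: "l \<in> I" and y: "local_embedding L (Ms l) (h ` K) y"
      using lim_local_embedding by blast
    have "local_embedding M (Ms l) K (y \<circ> h)"
      by (rule local_embedding_iso_comp[OF h h_one K(1) y])
    then show ?thesis using assms(2) l by blast
  qed
  then show ?thesis by (rule sofic_if_locally_embeddable)
qed

end
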